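(* Let $N$ be a positive integer. Then there exist equal norm tight integer frames with: (1) $4N^2$ vectors in $\mathcal{H}_{N^2+1}$; (2) $4N^2$ vectors in $\mathcal{H}_{2N^2+1}$; (3) $4N^2$ vectors in $\mathcal{H}_{3N^2+1}$; (4) $8N^2$ vectors in $\mathcal{H}_{4N^2+1}$; (5) $8N^2$ vectors in $\mathcal{H}_{4N^2+2}$.
   Context: $\mathcal{H}_M$ is the real $M$-dimensional Hilbert space, identified with $\mathbb{R}^M$ via a fixed orthonormal basis. An equal norm tight integer frame (ENTIF) with $N$ elements in $\mathcal{H}_M$ is an $M\times N$ integer matrix $A$ of rank $M$ with $AA^T=\lambda I_M$ for some $\lambda>0$ and all columns of the same Euclidean norm. *)

theory Defs
  imports Complex_Main
begin

text \<open>An M x N integer matrix is represented as a function A :: nat => nat => int,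
  of which only the entries A i j with i < M and j < N are relevant.
  Column j is the vector (A i j) for i < M; it is the j-th frame vector in R^M.\<close>

definition full_row_rank :: "nat \<Rightarrow> nat \<Rightarrow> (nat \<Rightarrow> nat \<Rightarrow> int) \<Rightarrow> bool" where
  "full_row_rank M N A \<longleftrightarrow>
     (\<forall>c :: nat \<Rightarrow> real. (\<forall>j<N. (\<Sum>i<M. c i * of_int (A i j)) = 0) \<longrightarrow> (\<forall>i<M. c i = 0))"

definition ENTIF :: "nat \<Rightarrow> nat \<Rightarrow> (nat \<Rightarrow> nat \<Rightarrow> int) \<Rightarrow> bool" where
  "ENTIF M N A \<longleftrightarrow>
     full_row_rank M N A \<and>
     (\<exists>lam::real. lam > 0 \<and>
        (\<forall>i<M. \<forall>k<M. (\<Sum>j<N. of_int (A i j * A k j)) = (if i = k then lam else 0))) \<and>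
     (\<forall>j<N. \<forall>j'<N. (\<Sum>i<M. (A i j)^2) = (\<Sum>i<M. (A i j')^2))"

definition has_ENTIF :: "nat \<Rightarrow> nat \<Rightarrow> bool" where
  "has_ENTIF N M \<longleftrightarrow> (\<exists>A. ENTIF M N A)"

end

(* Take integer matrices T (t x q) and H (h x q) with T T^T = lam I, H H^T = m lam I and T H^T = 0
   such that the stacked matrix [T; H] has columns of equal norm. Put m copies of T side by side
   above the block diagonal matrix with m copies of H: the resulting (t + h m) x (q m) matrix A
   satisfies A A^T = m lam I (which also gives full rank) and still has columns of equal norm.
   For the first three frames, T is the all-ones row and H is N times h further rows of the 4 x 4
   Hadamard matrix, with m = N^2. For the last two, T is the first one or two rows of the 4 x 4
   Haar matrix and H is 2N times its two finest rows, with m = 2 N^2. *)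

theory Submission
  imports Defs
begin

lemma sum_lessThan_mult_blocks:
  fixes f :: "nat \<Rightarrow> 'a::comm_monoid_add"
  shows "(\<Sum>j<q*m. f j) = (\<Sum>g<m. \<Sum>r<q. f (g*q + r))"
proof -
  have "(\<Sum>j<q*m. f j) = (\<Sum>g<m. sum f {g*q..<g*q + q})"
    using sum.nat_group[of f q m] by (simp add: mult.commute)
  also have "\<dots> = (\<Sum>g<m. \<Sum>r<q. f (g*q + r))"
  proof (rule sum.cong[OF refl])
    fix g
    show "sum f {g*q..<g*q + q} = (\<Sum>r<q. f (g*q + r))"
      by (simp add: sum.atLeastLessThan_shift_0[of f "g*q"] lessThan_atLeast0 comp_def)
  qed
  finally show ?thesis .
qed

lemma sum_lessThan_add_split:
  fixes f :: "nat \<Rightarrow> 'a::comm_monoid_add"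
  shows "(\<Sum>i<t+b. f i) = (\<Sum>i<t. f i) + (\<Sum>i<b. f (t+i))"
proof -
  have "(\<Sum>i<t+b. f i) = (\<Sum>i<t. f i) + sum f {t..<t+b}"
    by (simp add: lessThan_atLeast0 sum.atLeastLessThan_concat)
  also have "sum f {t..<t+b} = (\<Sum>i<b. f (t+i))"
    by (simp add: sum.atLeastLessThan_shift_0[of f t] lessThan_atLeast0 comp_def)
  finally show ?thesis .
qed

lemma sum_lessThan_mult_mod:
  fixes f :: "nat \<Rightarrow> 'a::semiring_1"
  shows "(\<Sum>j<q*m. f (j mod q)) = of_nat m * (\<Sum>r<q. f r)"
proof -
  have "(\<Sum>j<q*m. f (j mod q)) = (\<Sum>g<m. \<Sum>r<q. f ((g*q + r) mod q))"
    by (rule sum_lessThan_mult_blocks)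
  also have "\<dots> = (\<Sum>g<m. \<Sum>r<q. f r)"
    by (intro sum.cong refl) simp
  finally show ?thesis by simp
qed

definition tight_frame :: "nat \<Rightarrow> nat \<Rightarrow> (nat \<Rightarrow> nat \<Rightarrow> 'a::comm_semiring_1) \<Rightarrow> 'a \<Rightarrow> bool" where
  "tight_frame M N A lam \<longleftrightarrow>
     (\<forall>i<M. \<forall>k<M. (\<Sum>j<N. A i j * A k j) = (if i = k then lam else 0))"

definition equal_norm :: "nat \<Rightarrow> nat \<Rightarrow> (nat \<Rightarrow> nat \<Rightarrow> 'a::comm_semiring_1) \<Rightarrow> 'a \<Rightarrow> bool" where
  "equal_norm M N A c \<longleftrightarrow> (\<forall>j<N. (\<Sum>i<M. (A i j)^2) = c)"

lemma tight_frame_full_row_rank: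
  assumes tight: "tight_frame M N A lam" and "lam \<noteq> 0"
  shows "full_row_rank M N A"
  unfolding full_row_rank_def
proof (intro allI impI)
  fix c :: "nat \<Rightarrow> real" and k
  assume zero: "\<forall>j<N. (\<Sum>i<M. c i * of_int (A i j)) = 0" and k: "k < M"
  have "0 = (\<Sum>j<N. (\<Sum>i<M. c i * of_int (A i j)) * of_int (A k j))"
    using zero by simp
  also have "\<dots> = (\<Sum>i<M. c i * of_int (\<Sum>j<N. A i j * A k j))"
    by (simp add: sum_distrib_left sum_distrib_right sum.swap[of _ "{..<N}"] mult.assoc)
  also have "\<dots> = (\<Sum>i<M. c i * of_int (if i = k then lam else 0))"
    using tight k unfolding tight_frame_def by (intro sum.cong) auto
  also have "\<dots> = c k * of_int lam"
    using k by (simp add: if_distrib cong: if_cong)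
  finally show "c k = 0" using \<open>lam \<noteq> 0\<close> by simp
qed

lemma ENTIF_if_tight_frame_equal_norm:
  assumes "tight_frame M N A lam" "lam > 0" "equal_norm M N A c"
  shows "ENTIF M N A"
  unfolding ENTIF_def
proof (intro conjI)
  show "full_row_rank M N A"
    using assms by (intro tight_frame_full_row_rank) auto
  have "\<forall>i<M. \<forall>k<M. (\<Sum>j<N. of_int (A i j * A k j)) = (if i = k then real_of_int lam else 0)"
    using assms(1) unfolding tight_frame_def by (metis (full_types) of_int_0 of_int_sum)
  moreover have "real_of_int lam > 0"
    using \<open>lam > 0\<close> by simp
  ultimately show "\<exists>lam::real. lam > 0 \<and> (\<forall>i<M. \<forall>k<M. (\<Sum>j<N. of_int (A i j * A k j)) = (if i = k then lam else 0))"
    by blast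
  show "\<forall>j<N. \<forall>j'<N. (\<Sum>i<M. (A i j)^2) = (\<Sum>i<M. (A i j')^2)"
    using assms(3) unfolding equal_norm_def by simp
qed

definition stack_rows :: "nat \<Rightarrow> (nat \<Rightarrow> nat \<Rightarrow> 'a) \<Rightarrow> (nat \<Rightarrow> nat \<Rightarrow> 'a) \<Rightarrow> nat \<Rightarrow> nat \<Rightarrow> 'a" where
  "stack_rows t A B i j = (if i < t then A i j else B (i - t) j)"

(* The number m of copies is not a parameter of repeat_cols and block_diag: it is fixed by the
   ranges i < h * m and j < q * m over which these matrices are used. *)

definition repeat_cols :: "nat \<Rightarrow> (nat \<Rightarrow> nat \<Rightarrow> 'a) \<Rightarrow> nat \<Rightarrow> nat \<Rightarrow> 'a" where
  "repeat_cols q A i j = A i (j mod q)"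

definition block_diag :: "nat \<Rightarrow> nat \<Rightarrow> (nat \<Rightarrow> nat \<Rightarrow> 'a::zero) \<Rightarrow> nat \<Rightarrow> nat \<Rightarrow> 'a" where
  "block_diag h q A i j = (if i div h = j div q then A (i mod h) (j mod q) else 0)"

lemma tight_frame_stack_rows:
  assumes "tight_frame t N A lam" "tight_frame b N B lam"
    and "\<forall>i<t. \<forall>k<b. (\<Sum>j<N. A i j * B k j) = 0"
  shows "tight_frame (t + b) N (stack_rows t A B) lam"
  unfolding tight_frame_def
proof (intro allI impI)
  fix i k assume "i < t + b" "k < t + b"
  then show "(\<Sum>j<N. stack_rows t A B i j * stack_rows t A B k j) = (if i = k then lam else 0)"
    using assms unfolding tight_frame_def stack_rows_def
    by (cases "i < t"; cases "k < t") (auto simp: mult.commute)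
qed

lemma equal_norm_stack_rows:
  assumes "equal_norm t N A c" "equal_norm b N B d"
  shows "equal_norm (t + b) N (stack_rows t A B) (c + d)"
  using assms unfolding equal_norm_def
  by (simp add: sum_lessThan_add_split stack_rows_def)

lemma tight_frame_repeat_cols:
  assumes "tight_frame t q A lam"
  shows "tight_frame t (q * m) (repeat_cols q A) (of_nat m * lam)"
  using assms unfolding tight_frame_def repeat_cols_def
  by (simp add: sum_lessThan_mult_mod[where f = "\<lambda>r. A _ r * A _ r"])

lemma equal_norm_repeat_cols:
  assumes "equal_norm t q A c"
  shows "equal_norm t (q * m) (repeat_cols q A) c"
  using assms unfolding equal_norm_def repeat_cols_def
  by (metis mod_less_divisor mult_eq_0_iff not_gr0 not_less0)

lemma sum_mult_block_diag:
  fixes f :: "nat \<Rightarrow> 'a::comm_semiring_1"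
  assumes "k < h * m"
  shows "(\<Sum>j<q*m. f j * block_diag h q B k j) = (\<Sum>r<q. f (k div h * q + r) * B (k mod h) r)"
proof -
  have "k div h < m"
    using assms by (simp add: less_mult_imp_div_less mult.commute)
  have "(\<Sum>j<q*m. f j * block_diag h q B k j)
      = (\<Sum>g<m. \<Sum>r<q. f (g*q + r) * block_diag h q B k (g*q + r))"
    by (rule sum_lessThan_mult_blocks)
  also have "\<dots> = (\<Sum>g<m. if g = k div h then \<Sum>r<q. f (g*q + r) * B (k mod h) r else 0)"
    by (intro sum.cong refl) (auto simp: block_diag_def intro!: sum.cong)
  also have "\<dots> = (\<Sum>r<q. f (k div h * q + r) * B (k mod h) r)"
    using \<open>k div h < m\<close> by simp
  finally show ?thesis .
qed

lemma tight_frame_block_diag: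
  assumes tight: "tight_frame h q A lam"
  shows "tight_frame (h * m) (q * m) (block_diag h q A) lam"
  unfolding tight_frame_def
proof (intro allI impI)
  fix i k assume "i < h * m" "k < h * m"
  then have "h > 0"
    by (cases h) auto
  then have "i mod h < h" "k mod h < h"
    by simp_all
  have "i = k \<longleftrightarrow> i div h = k div h \<and> i mod h = k mod h"
    by (metis div_mult_mod_eq)
  have "(\<Sum>j<q*m. block_diag h q A i j * block_diag h q A k j)
      = (\<Sum>r<q. block_diag h q A i (k div h * q + r) * A (k mod h) r)"
    using \<open>k < h * m\<close> by (rule sum_mult_block_diag)
  also have "\<dots> = (if i div h = k div h then \<Sum>r<q. A (i mod h) r * A (k mod h) r else 0)"
    by (auto simp: block_diag_def intro!: sum.cong)
  also have "\<dots> = (if i = k then lam else 0)"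
    using tight \<open>i mod h < h\<close> \<open>k mod h < h\<close> \<open>i = k \<longleftrightarrow> _\<close>
    unfolding tight_frame_def by auto
  finally show "(\<Sum>j<q*m. block_diag h q A i j * block_diag h q A k j) = (if i = k then lam else 0)" .
qed

lemma equal_norm_block_diag:
  assumes "equal_norm h q A c"
  shows "equal_norm (h * m) (q * m) (block_diag h q A) c"
  unfolding equal_norm_def
proof (intro allI impI)
  fix j assume "j < q * m"
  then have "q > 0"
    by (cases q) auto
  with \<open>j < q * m\<close> have "j div q < m" "j mod q < q"
    by (simp_all add: less_mult_imp_div_less mult.commute)
  have "(\<Sum>i<h*m. (block_diag h q A i j)^2) = (\<Sum>g<m. \<Sum>r<h. (block_diag h q A (g*h + r) j)^2)"
    by (rule sum_lessThan_mult_blocks)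
  also have "\<dots> = (\<Sum>g<m. if g = j div q then \<Sum>r<h. (A r (j mod q))^2 else 0)"
    by (intro sum.cong refl) (auto simp: block_diag_def intro!: sum.cong)
  also have "\<dots> = c"
    using assms \<open>j div q < m\<close> \<open>j mod q < q\<close> unfolding equal_norm_def by simp
  finally show "(\<Sum>i<h*m. (block_diag h q A i j)^2) = c" .
qed

lemma sum_repeat_cols_mult_block_diag:
  fixes A B :: "nat \<Rightarrow> nat \<Rightarrow> 'a::comm_semiring_1"
  assumes "k < h * m"
  shows "(\<Sum>j<q*m. repeat_cols q A i j * block_diag h q B k j) = (\<Sum>r<q. A i r * B (k mod h) r)"
  unfolding sum_mult_block_diag[OF assms] repeat_cols_def by (auto intro: sum.cong)

lemma has_ENTIF_stack_repeat_block_diag: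
  fixes T H :: "nat \<Rightarrow> nat \<Rightarrow> int"
  assumes T: "tight_frame t q T lam" and H: "tight_frame h q H (int m * lam)"
    and orth: "\<forall>i<t. \<forall>k<h. (\<Sum>r<q. T i r * H k r) = 0"
    and "lam > 0" "m > 0"
    and "equal_norm t q T c" "equal_norm h q H d"
  shows "has_ENTIF (q * m) (t + h * m)"
proof -
  let ?A = "stack_rows t (repeat_cols q T) (block_diag h q H)"
  have "tight_frame (t + h * m) (q * m) ?A (int m * lam)"
  proof (rule tight_frame_stack_rows)
    show "tight_frame t (q * m) (repeat_cols q T) (int m * lam)"
      using tight_frame_repeat_cols[OF T] by simp
    show "tight_frame (h * m) (q * m) (block_diag h q H) (int m * lam)"
      using H by (rule tight_frame_block_diag)
    show "\<forall>i<t. \<forall>k<h * m. (\<Sum>j<q * m. repeat_cols q T i j * block_diag h q H k j) = 0"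
    proof (intro allI impI)
      fix i k assume "i < t" "k < h * m"
      then have "k mod h < h"
        by (cases h) auto
      have "(\<Sum>j<q * m. repeat_cols q T i j * block_diag h q H k j) = (\<Sum>r<q. T i r * H (k mod h) r)"
        using \<open>k < h * m\<close> by (rule sum_repeat_cols_mult_block_diag)
      also have "\<dots> = 0"
        using orth \<open>i < t\<close> \<open>k mod h < h\<close> by blast
      finally show "(\<Sum>j<q * m. repeat_cols q T i j * block_diag h q H k j) = 0" .
    qed
  qed
  moreover have "equal_norm (t + h * m) (q * m) ?A (c + d)"
    using assms(6,7) by (intro equal_norm_stack_rows equal_norm_repeat_cols equal_norm_block_diag)
  moreover have "int m * lam > 0"
    using \<open>lam > 0\<close> \<open>m > 0\<close> by simp
  ultimately have "ENTIF (t + h * m) (q * m) ?A"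
    by (intro ENTIF_if_tight_frame_equal_norm)
  then show ?thesis
    unfolding has_ENTIF_def by blast
qed

definition hadamard4 :: "nat \<Rightarrow> nat \<Rightarrow> int" where
  "hadamard4 i j = [[1, 1, 1, 1], [1, 1, -1, -1], [1, -1, 1, -1], [1, -1, -1, 1]] ! i ! j"

definition haar4 :: "nat \<Rightarrow> nat \<Rightarrow> int" where
  "haar4 i j = [[1, 1, 1, 1], [1, 1, -1, -1], [1, -1, 0, 0], [0, 0, 1, -1]] ! i ! j"

lemma hadamard4_orthogonal:
  assumes "i < 4" "k < 4"
  shows "(\<Sum>r<4. hadamard4 i r * hadamard4 k r) = (if i = k then 4 else 0)"
  using assms by (auto simp: hadamard4_def eval_nat_numeral less_Suc_eq lessThan_Suc)

lemma hadamard4_sq: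
  assumes "i < 4" "j < 4"
  shows "(hadamard4 i j)^2 = 1"
  using assms by (auto simp: hadamard4_def eval_nat_numeral less_Suc_eq)

lemma haar4_orthogonal:
  assumes "i < 4" "k < 4"
  shows "(\<Sum>r<4. haar4 i r * haar4 k r) = (if i = k then if i < 2 then 4 else 2 else 0)"
  using assms by (auto simp: haar4_def eval_nat_numeral less_Suc_eq lessThan_Suc)

lemma haar4_sq:
  assumes "i < 2" "j < 4"
  shows "(haar4 i j)^2 = 1"
  using assms by (auto simp: haar4_def eval_nat_numeral less_Suc_eq)

lemma haar4_sq_fine:
  assumes "j < 4"
  shows "(\<Sum>i<2. (haar4 (i + 2) j)^2) = 1"
  using assms by (auto simp: haar4_def eval_nat_numeral less_Suc_eq lessThan_Suc)

lemma has_ENTIF_hadamard4: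
  assumes "N > 0" "h < 4"
  shows "has_ENTIF (4 * N^2) (h * N^2 + 1)"
proof -
  let ?H = "\<lambda>i r. int N * hadamard4 (Suc i) r"
  have scaled: "(\<Sum>r<4. ?H i r * ?H k r) = int (N^2) * (\<Sum>r<4. hadamard4 (Suc i) r * hadamard4 (Suc k) r)"
    for i k by (simp add: sum_distrib_left power2_eq_square ac_simps)
  have "tight_frame 1 4 hadamard4 4"
    unfolding tight_frame_def by (simp add: hadamard4_orthogonal)
  moreover have "tight_frame h 4 ?H (int (N^2) * 4)"
    using \<open>h < 4\<close> unfolding tight_frame_def scaled by (simp add: hadamard4_orthogonal)
  moreover have "\<forall>i<1. \<forall>k<h. (\<Sum>r<4. hadamard4 i r * ?H k r) = 0"
    using \<open>h < 4\<close> hadamard4_orthogonal[of 0 "Suc _"] by (simp add: sum_distrib_left[symmetric] ac_simps)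
  moreover have "equal_norm 1 4 hadamard4 1"
    unfolding equal_norm_def by (simp add: hadamard4_sq)
  moreover have "equal_norm h 4 ?H (int (h * N^2))"
    using \<open>h < 4\<close> unfolding equal_norm_def by (simp add: power_mult_distrib hadamard4_sq)
  moreover have "N^2 > 0"
    using \<open>N > 0\<close> by simp
  ultimately have "has_ENTIF (4 * N^2) (1 + h * N^2)"
    by (intro has_ENTIF_stack_repeat_block_diag) auto
  then show ?thesis
    by (simp add: add.commute)
qed

lemma has_ENTIF_haar4:
  assumes "N > 0" "t \<le> 2"
  shows "has_ENTIF (8 * N^2) (4 * N^2 + t)"
proof -
  let ?H = "\<lambda>i r. 2 * int N * haar4 (i + 2) r"
  have scaled: "(\<Sum>r<4. ?H i r * ?H k r) = int (4 * N^2) * (\<Sum>r<4. haar4 (i + 2) r * haar4 (k + 2) r)"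
    for i k by (simp add: sum_distrib_left power2_eq_square ac_simps)
  have "tight_frame t 4 haar4 4"
    using \<open>t \<le> 2\<close> unfolding tight_frame_def by (simp add: haar4_orthogonal)
  moreover have "tight_frame 2 4 ?H (int (2 * N^2) * 4)"
    unfolding tight_frame_def scaled by (simp add: haar4_orthogonal)
  moreover have "\<forall>i<t. \<forall>k<2. (\<Sum>r<4. haar4 i r * ?H k r) = 0"
    using \<open>t \<le> 2\<close> haar4_orthogonal[of _ "_ + 2"] by (simp add: sum_distrib_left[symmetric] ac_simps)
  moreover have "equal_norm t 4 haar4 (int t)"
    using \<open>t \<le> 2\<close> unfolding equal_norm_def by (simp add: haar4_sq)
  moreover have "equal_norm 2 4 ?H (int (4 * N^2))"
    unfolding equal_norm_def
  proof (intro allI impI)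
    fix j :: nat assume "j < 4"
    have "(\<Sum>i<2. (?H i j)^2) = int (4 * N^2) * (\<Sum>i<2. (haar4 (i + 2) j)^2)"
      by (simp add: power_mult_distrib sum_distrib_left)
    also have "\<dots> = int (4 * N^2)"
      by (simp only: haar4_sq_fine[OF \<open>j < 4\<close>] mult_1_right)
    finally show "(\<Sum>i<2. (?H i j)^2) = int (4 * N^2)" .
  qed
  moreover have "2 * N^2 > 0"
    using \<open>N > 0\<close> by simp
  ultimately have "has_ENTIF (4 * (2 * N^2)) (t + 2 * (2 * N^2))"
    by (intro has_ENTIF_stack_repeat_block_diag) auto
  then show ?thesis
    by (simp add: add.commute)
qed

theorem theorem6p10:
  fixes N :: nat
  assumes "N > 0"
  shows "has_ENTIF (4 * N^2) (N^2 + 1) \<and>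
         has_ENTIF (4 * N^2) (2 * N^2 + 1) \<and>
         has_ENTIF (4 * N^2) (3 * N^2 + 1) \<and>
         has_ENTIF (8 * N^2) (4 * N^2 + 1) \<and>
         has_ENTIF (8 * N^2) (4 * N^2 + 2)"
  using has_ENTIF_hadamard4[OF assms, of 1] has_ENTIF_hadamard4[OF assms, of 2]
    has_ENTIF_hadamard4[OF assms, of 3] has_ENTIF_haar4[OF assms, of 1] has_ENTIF_haar4[OF assms, of 2]
  by simp

end
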